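(* Let $\mathcal{U}=[k]$ be finite, let $\{\mathbf{p}_u\}_{u\in\mathcal{U}}$ be a probability table with every $\mathbf{p}_u\in(0,1)^n$ and $\sum_i p_u^{(i)}=1$, let $d$ be a probability distribution on $\mathcal{U}$, and let $f_d(C^{(i)},C^{(j)})=\sum_{u}d(u)\,\frac{p_u^{(i)}}{p_u^{(i)}+p_u^{(j)}}$ for distinct $i,j$. For every cycle $\mathcal{C}=(c_1,\dots,c_\ell)$ of $\ell\ge3$ pairwise distinct indices in $[n]$, $$1<f_d(C^{(c_\ell)},C^{(c_1)})+\sum_{i=1}^{\ell-1}f_d(C^{(c_i)},C^{(c_{i+1})})<\ell-1.$$
   Context: $C^{(1)},\dots,C^{(n)}$ are class labels; $f_d$ are the overall opinions (edge-weights of the expert graph generated by the probability table and $d$); the displayed sum is the curl of the expert graph along $\mathcal{C}$. *)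

theory Defs
  imports Main "HOL-Analysis.Analysis"
begin

text \<open>Overall opinion f_d(C^(i), C^(j)) of the expert graph: experts u range over {0..<k},
  classes over {0..<n}; p u i is the probability expert u assigns to class i;
  d u is the weight of expert u.\<close>
definition overall_opinion :: "nat \<Rightarrow> (nat \<Rightarrow> real) \<Rightarrow> (nat \<Rightarrow> nat \<Rightarrow> real) \<Rightarrow> nat \<Rightarrow> nat \<Rightarrow> real" where
  "overall_opinion k d p i j = (\<Sum>u<k. d u * (p u i / (p u i + p u j)))"

definition cycle_curl :: "nat \<Rightarrow> (nat \<Rightarrow> real) \<Rightarrow> (nat \<Rightarrow> nat \<Rightarrow> real) \<Rightarrow> nat list \<Rightarrow> real" where
  "cycle_curl k d p c =
     overall_opinion k d p (last c) (hd c)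
     + (\<Sum>i<length c - 1. overall_opinion k d p (c ! i) (c ! (i + 1)))"

end

theory Submission
  imports Defs
begin

text \<open>Fix an expert \<open>u\<close> and put \<open>y\<^sub>i = p u c\<^sub>i > 0\<close>, \<open>S = \<Sum>\<^sub>i y\<^sub>i\<close>. Since the cycle has
  at least three vertices, \<open>y\<^sub>i + y\<^sub>i\<^sub>+\<^sub>1 < S\<close>, so \<open>y\<^sub>i / (y\<^sub>i + y\<^sub>i\<^sub>+\<^sub>1) > y\<^sub>i / S\<close> and the
  expert's curl exceeds \<open>\<Sum>\<^sub>i y\<^sub>i / S = 1\<close>. The same argument for the complementary ratios
  \<open>y\<^sub>i\<^sub>+\<^sub>1 / (y\<^sub>i + y\<^sub>i\<^sub>+\<^sub>1)\<close>, whose sum with the curl is \<open>\<ell>\<close>, gives the upper bound \<open>\<ell> - 1\<close>.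
  The curl of the expert graph is the \<open>d\<close>-weighted mean of the experts' curls, and a
  mean of a probability vector preserves strict bounds.\<close>

lemma sum_two_lt_sum:
  fixes y :: "'a \<Rightarrow> real"
  assumes "finite A" "3 \<le> card A" "\<And>x. x \<in> A \<Longrightarrow> 0 < y x"
    and "i \<in> A" "j \<in> A" "i \<noteq> j"
  shows "y i + y j < sum y A"
proof -
  have "card {i, j} < card A"
    using assms(2,6) by simp
  then have "\<not> A \<subseteq> {i, j}"
    using card_mono[of "{i, j}" A] by auto
  then obtain m where "m \<in> A - {i, j}"
    by blast
  then have "sum y {i, j} < sum y A"
    using assms by (intro sum_strict_mono2) (auto intro: less_imp_le)
  then show ?thesis
    using assms(6) by simp
qed

lemma ratio_sum_gt_1:
  fixes y :: "'a \<Rightarrow> real"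
  assumes A: "finite A" "3 \<le> card A" and pos: "\<And>x. x \<in> A \<Longrightarrow> 0 < y x"
    and \<tau>: "bij_betw \<tau> A A" and \<sigma>: "\<And>i. i \<in> A \<Longrightarrow> \<sigma> i \<in> A \<and> \<sigma> i \<noteq> \<tau> i"
  shows "1 < (\<Sum>i\<in>A. y (\<tau> i) / (y (\<tau> i) + y (\<sigma> i)))"
proof -
  have \<tau>A: "\<tau> i \<in> A" if "i \<in> A" for i
    using \<tau> that by (auto dest: bij_betw_apply)
  have "A \<noteq> {}"
    using A by auto
  have S: "0 < sum y A"
    using A pos by (intro sum_pos) auto
  have "1 = (\<Sum>i\<in>A. y i / sum y A)"
    using S by (simp add: sum_divide_distrib[symmetric])
  also have "\<dots> = (\<Sum>i\<in>A. y (\<tau> i) / sum y A)"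
    using sum.reindex_bij_betw[OF \<tau>, of "\<lambda>i. y i / sum y A"] by simp
  also have "\<dots> < (\<Sum>i\<in>A. y (\<tau> i) / (y (\<tau> i) + y (\<sigma> i)))"
  proof (rule sum_strict_mono[OF A(1) \<open>A \<noteq> {}\<close>])
    fix i assume i: "i \<in> A"
    have pair: "y (\<tau> i) + y (\<sigma> i) < sum y A"
      using \<sigma>[OF i] \<tau>A[OF i] by (intro sum_two_lt_sum[OF A pos]) auto
    have "0 < y (\<tau> i)" "0 < y (\<sigma> i)"
      using \<sigma>[OF i] \<tau>A[OF i] pos by auto
    then show "y (\<tau> i) / sum y A < y (\<tau> i) / (y (\<tau> i) + y (\<sigma> i))"
      using pair S by (intro divide_strict_left_mono) simp_all
  qed
  finally show ?thesis .
qed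

lemma bij_betw_Suc_mod: "bij_betw (\<lambda>i. Suc i mod L) {..<L} {..<L}"
proof (cases L)
  case (Suc M)
  have "inj_on (\<lambda>i. Suc i mod L) {..<L}"
    by (auto simp: inj_on_def Suc mod_Suc split: if_splits)
  moreover have "(\<lambda>i. Suc i mod L) ` {..<L} \<subseteq> {..<L}"
    using Suc by auto
  ultimately show ?thesis
    by (simp add: bij_betw_def endo_inj_surj)
qed simp

lemma cyclic_ratio_sum_bounds:
  fixes y :: "nat \<Rightarrow> real"
  assumes L: "3 \<le> L" and pos: "\<And>i. i < L \<Longrightarrow> 0 < y i"
  defines "R \<equiv> \<Sum>i<L. y i / (y i + y (Suc i mod L))"
  shows "1 < R \<and> R < real L - 1"
proof -
  have next_ne: "Suc i mod L \<noteq> i" if "i < L" for i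
    using L that by (cases "Suc i = L") auto
  have A: "finite {..<L}" "3 \<le> card {..<L}"
    using L by auto
  have "1 < R"
    using ratio_sum_gt_1[OF A _ bij_betw_id, of y "\<lambda>i. Suc i mod L"] L next_ne pos
    unfolding R_def by simp
  moreover have "1 < (\<Sum>i<L. y (Suc i mod L) / (y (Suc i mod L) + y i))"
    using ratio_sum_gt_1[OF A _ bij_betw_Suc_mod, of y id] next_ne pos by (simp add: eq_commute)
  moreover have "R + (\<Sum>i<L. y (Suc i mod L) / (y (Suc i mod L) + y i)) = real L"
  proof -
    have "y i / (y i + y (Suc i mod L)) + y (Suc i mod L) / (y (Suc i mod L) + y i) = 1"
      if "i < L" for i
      using pos[OF that] pos[of "Suc i mod L"] L
      by (simp add: add.commute add_divide_distrib[symmetric])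
    then show ?thesis
      unfolding R_def sum.distrib[symmetric] by simp
  qed
  ultimately show ?thesis
    by linarith
qed

lemma convex_combination_gt:
  fixes d T :: "'a \<Rightarrow> real"
  assumes U: "finite U" and d: "\<And>u. u \<in> U \<Longrightarrow> 0 \<le> d u" "sum d U = 1"
    and T: "\<And>u. u \<in> U \<Longrightarrow> a < T u"
  shows "a < (\<Sum>u\<in>U. d u * T u)"
proof -
  have "\<exists>u\<in>U. 0 < d u"
  proof (rule ccontr)
    assume "\<not> (\<exists>u\<in>U. 0 < d u)"
    then have "sum d U \<le> 0"
      by (intro sum_nonpos) (auto simp: not_less)
    then show False
      using d by simp
  qed
  then obtain u0 where "u0 \<in> U" "0 < d u0"
    by blast
  have "a = (\<Sum>u\<in>U. d u * a)"
    using d by (simp add: sum_distrib_right[symmetric])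
  also have "\<dots> < (\<Sum>u\<in>U. d u * T u)"
  proof (rule sum_strict_mono_ex1[OF U])
    show "\<forall>u\<in>U. d u * a \<le> d u * T u"
      using d T by (auto intro: mult_left_mono less_imp_le)
    show "\<exists>u\<in>U. d u * a < d u * T u"
      using \<open>u0 \<in> U\<close> \<open>0 < d u0\<close> T by (auto intro!: bexI[of _ u0])
  qed
  finally show ?thesis .
qed

lemma convex_combination_lt:
  fixes d T :: "'a \<Rightarrow> real"
  assumes "finite U" "\<And>u. u \<in> U \<Longrightarrow> 0 \<le> d u" "sum d U = 1"
    and "\<And>u. u \<in> U \<Longrightarrow> T u < b"
  shows "(\<Sum>u\<in>U. d u * T u) < b"
  using convex_combination_gt[of U d "- b" "\<lambda>u. - T u"] assms by (simp add: sum_negf)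

lemma cycle_curl_eq_sum_mod:
  assumes "c \<noteq> []"
  shows "cycle_curl k d p c
    = (\<Sum>i<length c. overall_opinion k d p (c ! i) (c ! (Suc i mod length c)))"
proof -
  obtain M where M: "length c = Suc M"
    using assms by (cases "length c") auto
  have "(\<Sum>i<length c. overall_opinion k d p (c ! i) (c ! (Suc i mod length c)))
      = (\<Sum>i<M. overall_opinion k d p (c ! i) (c ! (i + 1)))
        + overall_opinion k d p (c ! M) (c ! 0)"
    using M by (simp add: mod_Suc)
  then show ?thesis
    using assms M by (simp add: cycle_curl_def hd_conv_nth last_conv_nth)
qed

lemma cycle_curl_eq_weighted_sum:
  assumes "c \<noteq> []"
  shows "cycle_curl k d p c = (\<Sum>u<k. d u *
    (\<Sum>i<length c. p u (c ! i) / (p u (c ! i) + p u (c ! (Suc i mod length c)))))"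
  unfolding cycle_curl_eq_sum_mod[OF assms] overall_opinion_def
  by (subst sum.swap) (simp add: sum_distrib_left)

theorem corollary1:
  fixes k n :: nat and p :: "nat \<Rightarrow> nat \<Rightarrow> real" and d :: "nat \<Rightarrow> real" and c :: "nat list"
  assumes p_range: "\<And>u i. u < k \<Longrightarrow> i < n \<Longrightarrow> 0 < p u i \<and> p u i < 1"
    and p_sum: "\<And>u. u < k \<Longrightarrow> (\<Sum>i<n. p u i) = 1"
    and d_nonneg: "\<And>u. u < k \<Longrightarrow> 0 \<le> d u"
    and d_sum: "(\<Sum>u<k. d u) = 1"
    and c_len: "length c \<ge> 3"
    and c_dist: "distinct c"
    and c_range: "set c \<subseteq> {..<n}"
  shows "1 < cycle_curl k d p c \<and> cycle_curl k d p c < real (length c) - 1"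
proof -
  define T where "T u = (\<Sum>i<length c.
      p u (c ! i) / (p u (c ! i) + p u (c ! (Suc i mod length c))))" for u
  have "c \<noteq> []"
    using c_len by auto
  then have curl: "cycle_curl k d p c = (\<Sum>u<k. d u * T u)"
    by (simp add: cycle_curl_eq_weighted_sum T_def)
  have "1 < T u \<and> T u < real (length c) - 1" if "u < k" for u
    unfolding T_def
  proof (rule cyclic_ratio_sum_bounds[OF c_len])
    fix i assume "i < length c"
    then show "0 < p u (c ! i)"
      using p_range \<open>u < k\<close> c_range nth_mem by blast
  qed
  then show ?thesis
    unfolding curl
    using convex_combination_gt[of "{..<k}" d 1 T] d_nonneg d_sum
      convex_combination_lt[of "{..<k}" d T "real (length c) - 1"]
    by simp
qed

end
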